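(* Let $E$ be a real Banach space, $K\subset E$ nonempty closed convex, $Y$ a real Banach space containing a closed, convex, pointed cone $C$ with nonempty interior, $f:E\times E\to Y$, $T:K\to\mathcal P(K)$, and $g\in\mathcal F$ satisfying H1–H4, with B1–B4 holding. Suppose $\{x^k\}$, $\{v^k\}$ and $\{w^k\}$ are the (infinite) sequences generated by Algorithm SEML. If these sequences are bounded, then $$\lim_{k\to\infty}\|v^{k+1}-v^k\|=\lim_{k\to\infty}\|v^k-x^k\|=\lim_{k\to\infty}\|x^k-w^k\|=0.$$
   Context: $C^+=\{z\in Y^*:\langle y,z\rangle\ge0\ \forall y\in C\}$; $y\preceq y'$ iff $y'-y\in C$; $C$-convex: $G(tx+(1-t)y)\preceq tG(x)+(1-t)G(y)$. $\mathcal F$: functions $g:E\to\mathbb R$ strictly convex, lower semicontinuous, Gâteaux differentiable with derivative $g'$. $D_g(x,y)=g(x)-g(y)-\langle x-y,g'(y)\rangle$; $v_g(x,t)=\inf\{D_g(y,x):\|y-x\|=t\}$. H1: level sets of $D_g(x,\cdot)$ bounded; H2: $\inf_{x\in A}v_g(x,t)>0$ for $t>0$, bounded $A$; H3: $g'$ uniformly continuous on bounded sets; H4: $\lim_{\|x\|\to\infty}(g(x)-\rho\|x-z\|)=\infty$ for all $z$, $\rho>0$. $\Pi^g_D(x)$: unique minimizer of $D_g(\cdot,x)$ over nonempty closed convex $D$. B1: $f(x,x)=0$. B2: $f$ uniformly continuous on bounded subsets of $E\times E$. B3: $f(x,\cdot)$ $C$-convex. B4: $T$ has nonempty closed convex values,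 is demiclosed ($x^k\rightharpoonup\bar x$, $d(x^k,T(x^k))\to0\Rightarrow\bar x\in T(\bar x)$), lower semicontinuous at each $\bar x\in K$ ($x^k\to\bar x$, $\bar y\in T(\bar x)\Rightarrow\exists y^k\in T(x^k)$, $y^k\to\bar y$), quasi $D_g$-nonexpansive ($S(x)=\Pi^g_{T(x)}(x)$ has a fixed point and $D_g(p,S(x))\le D_g(p,x)$ for all fixed points $p$ of $S$ and $x\in K$). $\mathrm{argmin}^C_w\{G(y):y\in Q\}$: $a\in Q$ with no $y\in Q$ such that $G(a)-G(y)\in\mathrm{int}(C)$. Algorithm SEML: parameters $v^0\in K$, $\delta,\theta\in(0,1)$, $\{\beta_k\}\subset[\hat\beta,\tilde\beta]$ with $0<\hat\beta\le\tilde\beta$, $\{\gamma_k\}\subset[\varepsilon,1]$, $\varepsilon\in(0,1]$, $\{e^k\}\subset\mathrm{int}(C)$, $e^k\to\bar e\in\mathrm{int}(C)$. Given $v^k$: $x^k=\Pi^g_{T(v^k)}(v^k)$; $z^k\in\mathrm{argmin}^C_w\{\beta_kf(x^k,y)+g(y)e^k-\langle y,g'(x^k)\rangle e^k:y\in T(v^k)\}$; stop if $z^k=v^k$; else $\ell(k)=\min\{\ell\ge0:-\beta_kf(y^\ell,x^k)+\beta_kf(y^\ell,z^k)+\delta D_g(z^k,x^k)e^k\notin\mathrm{int}(C)\}$, $y^\ell=\theta^\ell z^k+(1-\theta^\ell)x^k$; $\alpha_k=\theta^{\ell(k)}$; $y^k=\alpha_kz^k+(1-\alpha_k)x^k$;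 $H_k=\{y:f(y^k,y)\in-C\}$; $K_0=K\cap H_0$, $K_k=K_{k-1}\cap H_k$; $w^k=\Pi^g_{K_k}(x^k)$; $v^{k+1}=\Pi^g_{L_k\cap M_k\cap N_k}(v^0)$ with $L_k=\{z:\langle z-x^k,g'(x^k)-g'(w^k)\rangle\le-\gamma_kD_g(x^k,w^k)\}$, $M_k=\{z:\langle z-v^k,g'(v^k)-g'(x^k)\rangle\le-\gamma_kD_g(v^k,x^k)\}$, $N_k=\{z:\langle z-v^k,g'(v^0)-g'(v^k)\rangle\le0\}$. *)

theory Defs
  imports "HOL-Analysis.Analysis"
begin

definition strictly_convex :: "('a::real_vector \<Rightarrow> real) \<Rightarrow> bool" where
  "strictly_convex g \<longleftrightarrow>
     (\<forall>x y t. x \<noteq> y \<longrightarrow> 0 < t \<longrightarrow> t < 1 \<longrightarrow>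
        g (t *\<^sub>R x + (1 - t) *\<^sub>R y) < t * g x + (1 - t) * g y)"

definition lsc :: "('a::topological_space \<Rightarrow> real) \<Rightarrow> bool" where
  "lsc g \<longleftrightarrow> (\<forall>x c. c < g x \<longrightarrow> eventually (\<lambda>y. c < g y) (at x))"

definition gateaux_deriv :: "('a::real_normed_vector \<Rightarrow> real) \<Rightarrow> ('a \<Rightarrow> ('a \<Rightarrow>\<^sub>L real)) \<Rightarrow> bool" where
  "gateaux_deriv g g' \<longleftrightarrow>
     (\<forall>x v. ((\<lambda>t. g (x + t *\<^sub>R v)) has_field_derivative blinfun_apply (g' x) v) (at 0))"

definition in_F :: "('a::real_normed_vector \<Rightarrow> real) \<Rightarrow> ('a \<Rightarrow> ('a \<Rightarrow>\<^sub>L real)) \<Rightarrow> bool" where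
  "in_F g g' \<longleftrightarrow> strictly_convex g \<and> lsc g \<and> gateaux_deriv g g'"

definition Dg :: "('a::real_normed_vector \<Rightarrow> real) \<Rightarrow> ('a \<Rightarrow> ('a \<Rightarrow>\<^sub>L real)) \<Rightarrow> 'a \<Rightarrow> 'a \<Rightarrow> real" where
  "Dg g g' x y = g x - g y - blinfun_apply (g' y) (x - y)"

(* modulus of total convexity v_g(x,t), infimum in the extended reals (inf {} = +\<infinity>) *)
definition vg :: "('a::real_normed_vector \<Rightarrow> real) \<Rightarrow> ('a \<Rightarrow> ('a \<Rightarrow>\<^sub>L real)) \<Rightarrow> 'a \<Rightarrow> real \<Rightarrow> ereal" where
  "vg g g' x t = (INF y \<in> {y. norm (y - x) = t}. ereal (Dg g g' y x))"

definition H1 :: "('a::real_normed_vector \<Rightarrow> real) \<Rightarrow> ('a \<Rightarrow> ('a \<Rightarrow>\<^sub>L real)) \<Rightarrow> bool" where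
  "H1 g g' \<longleftrightarrow> (\<forall>x r. bounded {y. Dg g g' x y \<le> r})"

definition H2 :: "('a::real_normed_vector \<Rightarrow> real) \<Rightarrow> ('a \<Rightarrow> ('a \<Rightarrow>\<^sub>L real)) \<Rightarrow> bool" where
  "H2 g g' \<longleftrightarrow> (\<forall>A t. bounded A \<longrightarrow> t > 0 \<longrightarrow> (INF x \<in> A. vg g g' x t) > 0)"

definition H3 :: "('a::real_normed_vector \<Rightarrow> ('a \<Rightarrow>\<^sub>L real)) \<Rightarrow> bool" where
  "H3 g' \<longleftrightarrow> (\<forall>S. bounded S \<longrightarrow> uniformly_continuous_on S g')"

definition H4 :: "('a::real_normed_vector \<Rightarrow> real) \<Rightarrow> bool" where
  "H4 g \<longleftrightarrow> (\<forall>z \<rho>. \<rho> > 0 \<longrightarrow> filterlim (\<lambda>x. g x - \<rho> * norm (x - z)) at_top at_infinity)"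

definition is_bproj :: "('a::real_normed_vector \<Rightarrow> real) \<Rightarrow> ('a \<Rightarrow> ('a \<Rightarrow>\<^sub>L real)) \<Rightarrow> 'a set \<Rightarrow> 'a \<Rightarrow> 'a \<Rightarrow> bool" where
  "is_bproj g g' D x p \<longleftrightarrow> p \<in> D \<and> (\<forall>y \<in> D. Dg g g' p x \<le> Dg g g' y x)"

definition weak_conv :: "(nat \<Rightarrow> 'a::real_normed_vector) \<Rightarrow> 'a \<Rightarrow> bool" where
  "weak_conv xs x \<longleftrightarrow> (\<forall>\<phi> :: 'a \<Rightarrow>\<^sub>L real. (\<lambda>k. blinfun_apply \<phi> (xs k)) \<longlonglongrightarrow> blinfun_apply \<phi> x)"

definition good_cone :: "'b::real_normed_vector set \<Rightarrow> bool" where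
  "good_cone C \<longleftrightarrow> closed C \<and> convex C \<and> cone C \<and> C \<inter> uminus ` C = {0} \<and> interior C \<noteq> {}"

definition wargmin :: "'b::real_normed_vector set \<Rightarrow> ('a \<Rightarrow> 'b) \<Rightarrow> 'a set \<Rightarrow> 'a \<Rightarrow> bool" where
  "wargmin C G Q a \<longleftrightarrow> a \<in> Q \<and> \<not> (\<exists>y \<in> Q. G a - G y \<in> interior C)"

definition B1 :: "('a \<Rightarrow> 'a \<Rightarrow> 'b::real_normed_vector) \<Rightarrow> bool" where
  "B1 f \<longleftrightarrow> (\<forall>x. f x x = 0)"

definition B2 :: "('a::real_normed_vector \<Rightarrow> 'a \<Rightarrow> 'b::real_normed_vector) \<Rightarrow> bool" where
  "B2 f \<longleftrightarrow> (\<forall>S :: ('a \<times> 'a) set. bounded S \<longrightarrow> uniformly_continuous_on S (\<lambda>(x, y). f x y))"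

definition B3 :: "'b::real_normed_vector set \<Rightarrow> ('a::real_vector \<Rightarrow> 'a \<Rightarrow> 'b) \<Rightarrow> bool" where
  "B3 C f \<longleftrightarrow> (\<forall>x u w t. 0 \<le> t \<longrightarrow> t \<le> 1 \<longrightarrow>
      (t *\<^sub>R f x u + (1 - t) *\<^sub>R f x w) - f x (t *\<^sub>R u + (1 - t) *\<^sub>R w) \<in> C)"

definition B4 :: "('a::real_normed_vector \<Rightarrow> real) \<Rightarrow> ('a \<Rightarrow> ('a \<Rightarrow>\<^sub>L real)) \<Rightarrow> 'a set \<Rightarrow> ('a \<Rightarrow> 'a set) \<Rightarrow> bool" where
  "B4 g g' K T \<longleftrightarrow>
     (\<forall>x \<in> K. T x \<noteq> {} \<and> closed (T x) \<and> convex (T x))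
     \<and> (\<forall>xs xb. (\<forall>k. xs k \<in> K) \<longrightarrow> xb \<in> K \<longrightarrow> weak_conv xs xb \<longrightarrow>
           (\<lambda>k. infdist (xs k) (T (xs k))) \<longlonglongrightarrow> 0 \<longrightarrow> xb \<in> T xb)
     \<and> (\<forall>xb \<in> K. \<forall>xs yb. (\<forall>k. xs k \<in> K) \<longrightarrow> xs \<longlonglongrightarrow> xb \<longrightarrow> yb \<in> T xb \<longrightarrow>
           (\<exists>ys. (\<forall>k. ys k \<in> T (xs k)) \<and> ys \<longlonglongrightarrow> yb))
     \<and> (\<exists>p \<in> K. is_bproj g g' (T p) p p)
     \<and> (\<forall>p \<in> K. is_bproj g g' (T p) p p \<longrightarrow>
           (\<forall>x \<in> K. \<forall>s. is_bproj g g' (T x) x s \<longrightarrow> Dg g g' p s \<le> Dg g g' p x))"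

end

theory Submission
  imports Defs
begin

(* Since v^(k+1) lies in the half-space N_k, the three-point identity gives
   D_g(v^(k+1), v^0) >= D_g(v^k, v^0) + D_g(v^(k+1), v^k).  The sequence D_g(v^k, v^0) is thus
   nondecreasing, and bounded because g' is bounded on bounded sets (H3), so
   D_g(v^(k+1), v^k) -> 0.  The cuts M_k and L_k bound gamma_k D_g(v^k, x^k) and
   gamma_k D_g(x^k, w^k) by a bound on g' times the vanishing distances |v^(k+1) - v^k| and
   |v^(k+1) - x^k|.  Finally the uniform total convexity H2 turns D_g(a_k, b_k) -> 0 into
   |a_k - b_k| -> 0 for bounded b. *)

lemma strictly_convex_imp_convex_on:
  assumes "strictly_convex g"
  shows "convex_on UNIV g"
proof
  fix t :: real and x y
  assume t: "0 < t" "t < 1"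
  show "g ((1 - t) *\<^sub>R x + t *\<^sub>R y) \<le> (1 - t) * g x + t * g y"
  proof (cases "x = y")
    case True
    then show ?thesis by (simp flip: scaleR_add_left distrib_right)
  next
    case False
    then show ?thesis
      using strictly_convex_def[THEN iffD1, OF assms, rule_format, of x y "1 - t"] t by simp
  qed
qed simp

lemma convex_on_line:
  assumes "convex_on UNIV g"
  shows "convex_on UNIV (\<lambda>t::real. g (y + t *\<^sub>R d))"
proof
  fix t a b :: real
  assume "0 < t" "t < 1"
  have "y + ((1 - t) *\<^sub>R a + t *\<^sub>R b) *\<^sub>R d = (1 - t) *\<^sub>R (y + a *\<^sub>R d) + t *\<^sub>R (y + b *\<^sub>R d)"
    by (simp add: algebra_simps)
  then show "g (y + ((1 - t) *\<^sub>R a + t *\<^sub>R b) *\<^sub>R d) \<le> (1 - t) * g (y + a *\<^sub>R d) + t * g (y + b *\<^sub>R d)"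
    using convex_onD[OF assms, of t] \<open>0 < t\<close> \<open>t < 1\<close> by simp
qed simp

lemma gateaux_deriv_above_tangent:
  assumes "convex_on UNIV g" "gateaux_deriv g g'"
  shows "g y + blinfun_apply (g' y) (x - y) \<le> g x"
proof -
  have "((\<lambda>t. g (y + t *\<^sub>R (x - y))) has_field_derivative blinfun_apply (g' y) (x - y)) (at 0)"
    using assms(2) unfolding gateaux_deriv_def by blast
  then have "blinfun_apply (g' y) (x - y) * (1 - 0) \<le> g (y + 1 *\<^sub>R (x - y)) - g (y + 0 *\<^sub>R (x - y))"
    by (intro convex_on_imp_above_tangent[OF convex_on_line[OF assms(1)]]) auto
  then show ?thesis by simp
qed

lemma Dg_nonneg:
  assumes "convex_on UNIV g" "gateaux_deriv g g'"
  shows "0 \<le> Dg g g' x y"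
  using gateaux_deriv_above_tangent[OF assms, of y x] unfolding Dg_def by simp

lemma Dg_le_norm_mult:
  assumes "convex_on UNIV g" "gateaux_deriv g g'"
  shows "Dg g g' x y \<le> norm (g' x - g' y) * norm (x - y)"
proof -
  have "Dg g g' x y \<le> blinfun_apply (g' x - g' y) (x - y)"
    using gateaux_deriv_above_tangent[OF assms, of x y]
    unfolding Dg_def by (simp add: blinfun.diff_left blinfun.diff_right)
  also have "\<dots> \<le> norm (g' x - g' y) * norm (x - y)"
    using norm_blinfun[of "g' x - g' y" "x - y"] by simp
  finally show ?thesis .
qed

lemma Dg_three_point:
  "Dg g g' z a = Dg g g' z b + Dg g g' b a + blinfun_apply (g' b - g' a) (z - b)"
  unfolding Dg_def by (simp add: blinfun.diff_left blinfun.diff_right algebra_simps)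

lemma Dg_segment_le:
  assumes "convex_on UNIV g" "0 \<le> s" "s \<le> 1"
  shows "Dg g g' (x + s *\<^sub>R (y - x)) x \<le> s * Dg g g' y x"
proof -
  have "g (x + s *\<^sub>R (y - x)) \<le> (1 - s) * g x + s * g y"
    using convex_onD[OF assms(1), of s x y] assms(2,3) by (simp add: algebra_simps)
  moreover have "blinfun_apply (g' x) (x + s *\<^sub>R (y - x) - x) = s * blinfun_apply (g' x) (y - x)"
    by (simp add: blinfun.scaleR_right)
  ultimately show ?thesis
    unfolding Dg_def by (simp add: algebra_simps)
qed

lemma H2_Dg_lower_bound:
  assumes g: "convex_on UNIV g" "gateaux_deriv g g'" and "H2 g g'" "bounded B" "0 < t"
  obtains c where "0 < c" "\<And>x y. x \<in> B \<Longrightarrow> t \<le> norm (y - x) \<Longrightarrow> c \<le> Dg g g' y x"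
proof -
  have "0 < (INF x \<in> B. vg g g' x t)"
    using assms unfolding H2_def by blast
  then obtain c where c: "0 < c" "ereal c < (INF x \<in> B. vg g g' x t)"
    using ereal_dense2 by force
  have "c \<le> Dg g g' y x" if x: "x \<in> B" and y: "t \<le> norm (y - x)" for x y
  proof -
    define s where "s = t / norm (y - x)"
    have s: "0 \<le> s" "s \<le> 1" "norm (s *\<^sub>R (y - x)) = t"
      using \<open>0 < t\<close> y by (auto simp: s_def divide_le_eq_1)
    have "ereal c < vg g g' x t"
      using c(2) INF_lower[OF x, of "\<lambda>x. vg g g' x t"] by simp
    also have "\<dots> \<le> ereal (Dg g g' (x + s *\<^sub>R (y - x)) x)"
      unfolding vg_def using s(3) by (intro INF_lower) simp
    finally have "c < Dg g g' (x + s *\<^sub>R (y - x)) x" by simp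
    also have "\<dots> \<le> s * Dg g g' y x"
      using Dg_segment_le[OF g(1) s(1,2)] .
    also have "\<dots> \<le> Dg g g' y x"
      using s Dg_nonneg[OF g] by (simp add: mult_left_le_one_le)
    finally show ?thesis by simp
  qed
  then show ?thesis using that c(1) by blast
qed

lemma Dg_tendsto_0_imp_norm_diff_tendsto_0:
  assumes g: "convex_on UNIV g" "gateaux_deriv g g'" "H2 g g'"
    and b: "bounded (range b)"
    and D: "(\<lambda>k. Dg g g' (a k) (b k)) \<longlonglongrightarrow> 0"
  shows "(\<lambda>k. norm (a k - b k)) \<longlonglongrightarrow> 0"
proof (rule order_tendstoI)
  fix r :: real
  assume "0 < r"
  obtain c where "0 < c" and c: "\<And>k. r \<le> norm (a k - b k) \<Longrightarrow> c \<le> Dg g g' (a k) (b k)"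
    using H2_Dg_lower_bound[OF g b \<open>0 < r\<close>] by (metis rangeI)
  from order_tendstoD(2)[OF D \<open>0 < c\<close>]
  show "\<forall>\<^sub>F k in sequentially. norm (a k - b k) < r"
    by eventually_elim (meson c leD leI)
qed (simp add: order_less_le_trans)

lemma uniformly_continuous_on_convex_bounded_image:
  fixes f :: "'a::real_normed_vector \<Rightarrow> 'b::real_normed_vector"
  assumes f: "uniformly_continuous_on S f" and S: "convex S" "bounded S"
  shows "bounded (f ` S)"
proof (cases "S = {}")
  case False
  then obtain a where a: "a \<in> S" by blast
  obtain d where "0 < d" and d: "\<And>x x'. x \<in> S \<Longrightarrow> x' \<in> S \<Longrightarrow> dist x' x < d \<Longrightarrow> dist (f x') (f x) < 1"
    using f zero_less_one unfolding uniformly_continuous_on_def by metis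
  obtain R where R: "\<And>x. x \<in> S \<Longrightarrow> dist a x \<le> R"
    using S(2) bounded_any_center by metis
  obtain N :: nat where N: "R / d < N"
    using reals_Archimedean2 by blast
  have "R < N * d" "0 \<le> R"
    using N \<open>0 < d\<close> R[OF a] by (auto simp: pos_divide_less_eq)
  then have "0 < real N"
    using \<open>0 < d\<close> zero_less_mult_pos2[of "real N" d] by linarith
  then have "0 < N" "R / N < d"
    using \<open>R < N * d\<close> by (simp_all add: pos_divide_less_eq mult.commute)
  have chain: "dist (f ((1 - j / N) *\<^sub>R a + (j / N) *\<^sub>R x)) (f a) \<le> j"
    if x: "x \<in> S" and "j \<le> N" for x j
    using \<open>j \<le> N\<close>
  proof (induction j)
    case (Suc j)
    define p where "p i = (1 - i / N) *\<^sub>R a + (i / N) *\<^sub>R x" for i :: nat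
    have inS: "p i \<in> S" if "i \<le> N" for i
      unfolding p_def using that \<open>0 < N\<close> by (intro convexD_alt[OF S(1) a x]) auto
    have "p (Suc j) - p j = (1 / N) *\<^sub>R (x - a)"
      unfolding p_def by (simp add: algebra_simps add_divide_distrib)
    then have "dist (p (Suc j)) (p j) \<le> R / N"
      using R[OF x] \<open>0 < N\<close> by (simp add: dist_norm norm_minus_commute divide_right_mono)
    then have "dist (f (p (Suc j))) (f (p j)) < 1"
      using d inS Suc.prems \<open>R / N < d\<close> by simp
    moreover have "dist (f (p j)) (f a) \<le> j"
      using Suc unfolding p_def by simp
    ultimately show ?case
      using dist_triangle[of "f (p (Suc j))" "f a" "f (p j)"] unfolding p_def by simp
  qed simp
  have "dist (f a) (f x) \<le> N" if "x \<in> S" for x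
    using chain[OF that order_refl] \<open>0 < N\<close> by (simp add: dist_commute)
  then show ?thesis
    unfolding bounded_any_center[where a = "f a"] by blast
qed simp

lemma H3_bounded_image:
  assumes "H3 g'" "bounded S"
  shows "bounded (g' ` S)"
proof -
  obtain c R where "S \<subseteq> cball c R"
    using assms(2) bounded_subset_cball by blast
  moreover have "bounded (g' ` cball c R)"
    using assms(1) unfolding H3_def
    by (intro uniformly_continuous_on_convex_bounded_image) auto
  ultimately show ?thesis
    by (meson bounded_subset image_mono)
qed

lemma Dg_successive_tendsto_0:
  assumes g: "convex_on UNIV g" "gateaux_deriv g g'"
    and bdd: "bounded (range v)" "bounded (g' ` range v)"
    and cut: "\<And>k. blinfun_apply (g' (v 0) - g' (v k)) (v (Suc k) - v k) \<le> 0"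
  shows "(\<lambda>k. Dg g g' (v (Suc k)) (v k)) \<longlonglongrightarrow> 0"
proof -
  define X where "X k = Dg g g' (v k) (v 0)" for k
  have step: "Dg g g' (v (Suc k)) (v k) \<le> X (Suc k) - X k" for k
  proof -
    have "0 \<le> blinfun_apply (g' (v k) - g' (v 0)) (v (Suc k) - v k)"
      using cut[of k] by (simp add: blinfun.diff_left)
    then show ?thesis
      using Dg_three_point[of g g' "v (Suc k)" "v 0" "v k"] unfolding X_def by linarith
  qed
  have "incseq X"
  proof (rule incseq_SucI)
    show "X k \<le> X (Suc k)" for k
      using step[of k] Dg_nonneg[OF g, of "v (Suc k)" "v k"] by linarith
  qed
  moreover have "X k \<le> diameter (g' ` range v) * diameter (range v)" for k
  proof -
    have "X k \<le> dist (g' (v k)) (g' (v 0)) * dist (v k) (v 0)"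
      unfolding X_def dist_norm by (rule Dg_le_norm_mult[OF g])
    also have "\<dots> \<le> diameter (g' ` range v) * diameter (range v)"
    proof (rule mult_mono)
      show "dist (g' (v k)) (g' (v 0)) \<le> diameter (g' ` range v)"
        using bdd(2) by (rule diameter_bounded_bound) auto
      show "dist (v k) (v 0) \<le> diameter (range v)"
        using bdd(1) by (rule diameter_bounded_bound) auto
    qed (simp_all add: diameter_ge_0 bdd)
    finally show ?thesis .
  qed
  ultimately obtain L where L: "X \<longlonglongrightarrow> L"
    using incseq_convergent by blast
  have diff: "(\<lambda>k. X (Suc k) - X k) \<longlonglongrightarrow> L - L"
    by (intro tendsto_diff LIMSEQ_Suc L)
  show ?thesis
  proof (rule tendsto_sandwich[of "\<lambda>_. 0" _ _ "\<lambda>k. X (Suc k) - X k"])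
    show "\<forall>\<^sub>F k in sequentially. 0 \<le> Dg g g' (v (Suc k)) (v k)"
      using Dg_nonneg[OF g] by simp
    show "\<forall>\<^sub>F k in sequentially. Dg g g' (v (Suc k)) (v k) \<le> X (Suc k) - X k"
      using step by simp
  qed (use diff in simp_all)
qed

lemma Dg_tendsto_0_of_halfspace_steps:
  assumes g: "convex_on UNIV g" "gateaux_deriv g g'"
    and \<gamma>: "0 < \<epsilon>" "\<And>k. \<epsilon> \<le> \<gamma> k"
    and cut: "\<And>k. blinfun_apply (g' (a k) - g' (b k)) (u k - a k) \<le> - \<gamma> k * Dg g g' (a k) (b k)"
    and bdd: "bounded (g' ` (range a \<union> range b))"
    and u: "(\<lambda>k. u k - a k) \<longlonglongrightarrow> 0"
  shows "(\<lambda>k. Dg g g' (a k) (b k)) \<longlonglongrightarrow> 0"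
proof (rule Lim_null_comparison)
  let ?M = "diameter (g' ` (range a \<union> range b))"
  have "Dg g g' (a k) (b k) \<le> ?M / \<epsilon> * norm (u k - a k)" for k
  proof -
    have "\<epsilon> * Dg g g' (a k) (b k) \<le> \<gamma> k * Dg g g' (a k) (b k)"
      using \<gamma> Dg_nonneg[OF g] by (intro mult_right_mono)
    also have "\<dots> \<le> - blinfun_apply (g' (a k) - g' (b k)) (u k - a k)"
      using cut[of k] by simp
    also have "\<dots> \<le> dist (g' (a k)) (g' (b k)) * norm (u k - a k)"
      using norm_blinfun[of "g' (a k) - g' (b k)" "u k - a k"] by (simp add: dist_norm)
    also have "\<dots> \<le> ?M * norm (u k - a k)"
      using bdd by (intro mult_right_mono diameter_bounded_bound) auto
    finally show ?thesis
      using \<gamma>(1) by (simp add: pos_le_divide_eq mult.commute)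
  qed
  then show "\<forall>\<^sub>F k in sequentially. norm (Dg g g' (a k) (b k)) \<le> ?M / \<epsilon> * norm (u k - a k)"
    using Dg_nonneg[OF g] by simp
  show "(\<lambda>k. ?M / \<epsilon> * norm (u k - a k)) \<longlonglongrightarrow> 0"
    using u by (intro tendsto_mult_right_zero) (simp add: tendsto_norm_zero_iff)
qed

theorem lemma3p9:
  fixes K :: "'a::banach set" and C :: "'b::banach set"
    and f :: "'a \<Rightarrow> 'a \<Rightarrow> 'b" and T :: "'a \<Rightarrow> 'a set"
    and g :: "'a \<Rightarrow> real" and g' :: "'a \<Rightarrow> ('a \<Rightarrow>\<^sub>L real)"
    and \<delta> \<theta> \<beta>lo \<beta>hi \<epsilon> :: real and \<beta> \<gamma> \<alpha> :: "nat \<Rightarrow> real"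
    and e :: "nat \<Rightarrow> 'b" and eb :: 'b
    and v x z y w :: "nat \<Rightarrow> 'a" and l :: "nat \<Rightarrow> nat"
  assumes K: "K \<noteq> {}" "closed K" "convex K"
    and C: "good_cone C"
    and T: "\<forall>u \<in> K. T u \<subseteq> K"
    and gF: "in_F g g'" and "H1 g g'" and "H2 g g'" and "H3 g'" and "H4 g"
    and "B1 f" and "B2 f" and "B3 C f" and "B4 g g' K T"
    \<comment> \<open>parameters of Algorithm SEML\<close>
    and v0: "v 0 \<in> K"
    and \<delta>: "0 < \<delta>" "\<delta> < 1" and \<theta>: "0 < \<theta>" "\<theta> < 1"
    and \<beta>b: "0 < \<beta>lo" "\<beta>lo \<le> \<beta>hi" "\<forall>k. \<beta>lo \<le> \<beta> k \<and> \<beta> k \<le> \<beta>hi"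
    and \<epsilon>: "0 < \<epsilon>" "\<epsilon> \<le> 1" and \<gamma>: "\<forall>k. \<epsilon> \<le> \<gamma> k \<and> \<gamma> k \<le> 1"
    and e: "\<forall>k. e k \<in> interior C" "e \<longlonglongrightarrow> eb" "eb \<in> interior C"
    \<comment> \<open>iteration of Algorithm SEML (never stopping)\<close>
    and xk: "\<forall>k. is_bproj g g' (T (v k)) (v k) (x k)"
    and zk: "\<forall>k. wargmin C (\<lambda>u. \<beta> k *\<^sub>R f (x k) u + g u *\<^sub>R e k
                               - blinfun_apply (g' (x k)) u *\<^sub>R e k) (T (v k)) (z k)"
    and nostop: "\<forall>k. z k \<noteq> v k"
    and lk: "\<forall>k. let P = (\<lambda>m. let ym = \<theta> ^ m *\<^sub>R z k + (1 - \<theta> ^ m) *\<^sub>R x k in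
                   - (\<beta> k *\<^sub>R f ym (x k)) + \<beta> k *\<^sub>R f ym (z k)
                   + (\<delta> * Dg g g' (z k) (x k)) *\<^sub>R e k \<notin> interior C)
               in P (l k) \<and> (\<forall>m < l k. \<not> P m)"
    and \<alpha>k: "\<forall>k. \<alpha> k = \<theta> ^ l k"
    and yk: "\<forall>k. y k = \<alpha> k *\<^sub>R z k + (1 - \<alpha> k) *\<^sub>R x k"
    and wk: "\<forall>k. is_bproj g g' (K \<inter> (\<Inter>j \<in> {..k}. {u. f (y j) u \<in> uminus ` C})) (x k) (w k)"
    and vk: "\<forall>k. is_bproj g g'
               ({u. blinfun_apply (g' (x k) - g' (w k)) (u - x k) \<le> - \<gamma> k * Dg g g' (x k) (w k)}
                \<inter> {u. blinfun_apply (g' (v k) - g' (x k)) (u - v k) \<le> - \<gamma> k * Dg g g' (v k) (x k)}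
                \<inter> {u. blinfun_apply (g' (v 0) - g' (v k)) (u - v k) \<le> 0})
               (v 0) (v (Suc k))"
    and bdd: "bounded (range x)" "bounded (range v)" "bounded (range w)"
  shows "(\<lambda>k. norm (v (Suc k) - v k)) \<longlonglongrightarrow> 0
       \<and> (\<lambda>k. norm (v k - x k)) \<longlonglongrightarrow> 0
       \<and> (\<lambda>k. norm (x k - w k)) \<longlonglongrightarrow> 0"
proof -
  have g: "convex_on UNIV g" "gateaux_deriv g g'"
    using gF strictly_convex_imp_convex_on unfolding in_F_def by auto
  have g'_all: "bounded (g' ` (range x \<union> range v \<union> range w))"
    using \<open>H3 g'\<close> bdd by (intro H3_bounded_image) auto
  have g'_bdd: "bounded (g' ` range v)" "bounded (g' ` (range v \<union> range x))"
    "bounded (g' ` (range x \<union> range w))"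
    by (rule bounded_subset[OF g'_all], blast)+
  have cuts: "blinfun_apply (g' (x k) - g' (w k)) (v (Suc k) - x k) \<le> - \<gamma> k * Dg g g' (x k) (w k)"
    "blinfun_apply (g' (v k) - g' (x k)) (v (Suc k) - v k) \<le> - \<gamma> k * Dg g g' (v k) (x k)"
    "blinfun_apply (g' (v 0) - g' (v k)) (v (Suc k) - v k) \<le> 0" for k
    using conjunct1[OF vk[rule_format, of k, unfolded is_bproj_def]] by simp_all
  have \<gamma>': "\<And>k. \<epsilon> \<le> \<gamma> k"
    using \<gamma> by blast
  have "(\<lambda>k. Dg g g' (v (Suc k)) (v k)) \<longlonglongrightarrow> 0"
    by (rule Dg_successive_tendsto_0[OF g bdd(2) g'_bdd(1) cuts(3)])
  then have vv: "(\<lambda>k. v (Suc k) - v k) \<longlonglongrightarrow> 0"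
    using Dg_tendsto_0_imp_norm_diff_tendsto_0[OF g \<open>H2 g g'\<close> bdd(2)] by (simp add: tendsto_norm_zero_iff)
  have "(\<lambda>k. Dg g g' (v k) (x k)) \<longlonglongrightarrow> 0"
    by (rule Dg_tendsto_0_of_halfspace_steps[OF g \<epsilon>(1) \<gamma>' cuts(2) g'_bdd(2) vv])
  then have vx: "(\<lambda>k. v k - x k) \<longlonglongrightarrow> 0"
    using Dg_tendsto_0_imp_norm_diff_tendsto_0[OF g \<open>H2 g g'\<close> bdd(1)] by (simp add: tendsto_norm_zero_iff)
  have "(\<lambda>k. v (Suc k) - x k) \<longlonglongrightarrow> 0"
    using tendsto_add_zero[OF vv vx] by simp
  then have "(\<lambda>k. Dg g g' (x k) (w k)) \<longlonglongrightarrow> 0"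
    by (rule Dg_tendsto_0_of_halfspace_steps[OF g \<epsilon>(1) \<gamma>' cuts(1) g'_bdd(3)])
  then have "(\<lambda>k. norm (x k - w k)) \<longlonglongrightarrow> 0"
    by (rule Dg_tendsto_0_imp_norm_diff_tendsto_0[OF g \<open>H2 g g'\<close> bdd(3)])
  with vv vx show ?thesis
    by (simp add: tendsto_norm_zero_iff)
qed

end
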